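(* Let $f=\frac1n\sum_{i=1}^n f_i$ where each $f_i:\mathbb{R}^d\to\mathbb{R}$ is convex, differentiable and $L$-smooth, let $X\subset\mathbb{R}^d$ be compact convex, and assume there is $x^\star\in X$ with $f(x^\star)=\min_{\mathbb{R}^d}f=\min_X f$. Let $T\ge1$ and let $(x^{(t)})_{1\le t\le T}$ and $(g^{(t)})$ be generated by the AdaLVR algorithm (described in the context, with either AdaGrad variant and either gradient estimator type, and $p=1/n$ in the L-SVRG case). Then $$\mathbb{E}\Big[\sum_{t=1}^T\mathbb{E}_t\big[\|g^{(t)}\|^2\big]\Big]\le \mathbb{E}\Big[8L\sum_{t=1}^T\big(f(x^{(t)})-f(x^\star)\big)\Big]+4Ln\big(f(x^{(1)})-f(x^\star)\big).$$
   Context: AdaLVR algorithm with inputs $x^{(1)}\in\mathbb{R}^d$, $\eta>0$, $p\in(0,1)$: set $G_0=0$; for SAGA set $\tilde x_i^{(0)}=x^{(1)}$ ($1\le i\le n$), for L-SVRG set $\tilde x^{(0)}=x^{(1)}$. For $t=1,2,\dots$: sample $i(t)$ uniformly from $\{1,\dots,n\}$ independently of the past; compute (SAGA) $g^{(t)}=\nabla f_{i(t)}(x^{(t)})-\nabla f_{i(t)}(\tilde x^{(t-1)}_{i(t)})+\frac1n\sum_{i}\nabla f_i(\tilde x_i^{(t-1)})$ and set $\tilde x_{i}^{(t)}=x^{(t)}$ if $i=i(t)$, else $\tilde x_i^{(t)}=\tilde x_i^{(t-1)}$; or (L-SVRG) $g^{(t)}=\nabla f_{i(t)}(x^{(t)})-\nabla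 f_{i(t)}(\tilde x^{(t-1)})+\nabla f(\tilde x^{(t-1)})$, sample $Z^{(t)}\sim\mathrm{Bernoulli}(p)$ independently and set $\tilde x^{(t)}=x^{(t)}$ if $Z^{(t)}=1$, else $\tilde x^{(t)}=\tilde x^{(t-1)}$. Set $G_t=G_{t-1}+\|g^{(t)}\|^2$ (Norm) or $G_t=G_{t-1}+\operatorname{diag}(g^{(t)}g^{(t)\top})$ (Diagonal, off-diagonal entries zeroed), $A_t=G_t^{1/2}$, and $x^{(t+1)}\in\arg\min_{y\in X}\|y-(x^{(t)}-\eta A_t^{-1}g^{(t)})\|_{A_t}$, with $A_t^{-1}$ the Moore–Penrose pseudo-inverse and $\|v\|_A=\langle v,Av\rangle^{1/2}$. $\mathbb{E}_t$ denotes conditional expectation given the history up to the computation of $x^{(t)}$ (i.e. integrating over $i(t)$ and $Z^{(t)}$). *)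

theory Defs
  imports "HOL-Analysis.Analysis" "HOL-Probability.Probability"
begin

datatype adagrad_variant = NormVariant | DiagonalVariant
datatype estimator_type = SAGA | LSVRG

text \<open>Randomness: omega t = (i(t), Z(t)), indices i(t) in {0..<n} (0-based),
  Z(t) the Bernoulli coin (only used by L-SVRG). x is the trajectory t |-> x^(t)
  along the given outcome omega; grad i is the gradient of f_i.\<close>

fun saga_snap :: "(nat \<Rightarrow> nat \<times> bool) \<Rightarrow> (nat \<Rightarrow> 'v) \<Rightarrow> nat \<Rightarrow> nat \<Rightarrow> 'v" where
  "saga_snap \<omega> x i 0 = x 1"
| "saga_snap \<omega> x i (Suc t) = (if fst (\<omega> (Suc t)) = i then x (Suc t) else saga_snap \<omega> x i t)"

fun svrg_snap :: "(nat \<Rightarrow> nat \<times> bool) \<Rightarrow> (nat \<Rightarrow> 'v) \<Rightarrow> nat \<Rightarrow> 'v" where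
  "svrg_snap \<omega> x 0 = x 1"
| "svrg_snap \<omega> x (Suc t) = (if snd (\<omega> (Suc t)) then x (Suc t) else svrg_snap \<omega> x t)"

definition lvr_grad :: "estimator_type \<Rightarrow> nat \<Rightarrow> (nat \<Rightarrow> real^'d \<Rightarrow> real^'d)
    \<Rightarrow> (nat \<Rightarrow> nat \<times> bool) \<Rightarrow> (nat \<Rightarrow> real^'d) \<Rightarrow> nat \<Rightarrow> real^'d" where
  "lvr_grad est n grad \<omega> x t =
     (let i = fst (\<omega> t) in
      case est of
        SAGA \<Rightarrow> grad i (x t) - grad i (saga_snap \<omega> x i (t - 1))
                 + (1 / real n) *\<^sub>R (\<Sum>j<n. grad j (saga_snap \<omega> x j (t - 1)))
      | LSVRG \<Rightarrow> grad i (x t) - grad i (svrg_snap \<omega> x (t - 1))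
                 + (1 / real n) *\<^sub>R (\<Sum>j<n. grad j (svrg_snap \<omega> x (t - 1))))"

text \<open>The (diagonal) matrix A_t = G_t^(1/2), represented by its diagonal.\<close>
definition lvr_A :: "adagrad_variant \<Rightarrow> estimator_type \<Rightarrow> nat \<Rightarrow> (nat \<Rightarrow> real^'d \<Rightarrow> real^'d)
    \<Rightarrow> (nat \<Rightarrow> nat \<times> bool) \<Rightarrow> (nat \<Rightarrow> real^'d) \<Rightarrow> nat \<Rightarrow> real^'d" where
  "lvr_A ag est n grad \<omega> x t =
     (case ag of
        NormVariant \<Rightarrow> (\<chi> j. sqrt (\<Sum>s\<in>{1..t}. (norm (lvr_grad est n grad \<omega> x s))\<^sup>2))
      | DiagonalVariant \<Rightarrow> (\<chi> j. sqrt (\<Sum>s\<in>{1..t}. (lvr_grad est n grad \<omega> x s $ j)\<^sup>2)))"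

text \<open>Moore-Penrose pseudo-inverse of the diagonal matrix diag(a) applied to v.\<close>
definition diag_pinv_apply :: "real^'d \<Rightarrow> real^'d \<Rightarrow> real^'d" where
  "diag_pinv_apply a v = (\<chi> j. if a $ j = 0 then 0 else v $ j / a $ j)"

definition diag_norm :: "real^'d \<Rightarrow> real^'d \<Rightarrow> real" where
  "diag_norm a v = sqrt (\<Sum>j\<in>UNIV. a $ j * (v $ j)\<^sup>2)"

definition adalvr_step_ok :: "adagrad_variant \<Rightarrow> estimator_type \<Rightarrow> nat \<Rightarrow> (nat \<Rightarrow> real^'d \<Rightarrow> real^'d)
    \<Rightarrow> real \<Rightarrow> (real^'d) set \<Rightarrow> (nat \<Rightarrow> nat \<times> bool) \<Rightarrow> (nat \<Rightarrow> real^'d) \<Rightarrow> nat \<Rightarrow> bool" where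
  "adalvr_step_ok ag est n grad \<eta> X \<omega> x t =
     (let A = lvr_A ag est n grad \<omega> x t;
          g = lvr_grad est n grad \<omega> x t;
          z = x t - \<eta> *\<^sub>R diag_pinv_apply A g
      in is_arg_min (\<lambda>y. diag_norm A (y - z)) (\<lambda>y. y \<in> X) (x (Suc t)))"

definition step_pmf :: "nat \<Rightarrow> (nat \<times> bool) pmf" where
  "step_pmf n = pair_pmf (pmf_of_set {..<n}) (bernoulli_pmf (1 / real n))"

definition omega_pmf :: "nat \<Rightarrow> nat \<Rightarrow> (nat \<Rightarrow> nat \<times> bool) pmf" where
  "omega_pmf n T = Pi_pmf {1..T} (0, False) (\<lambda>_. step_pmf n)"

text \<open>E_t: integrate over (i(t), Z(t)) keeping all other random choices fixed.\<close>
definition cond_exp_t :: "nat \<Rightarrow> nat \<Rightarrow> ((nat \<Rightarrow> nat \<times> bool) \<Rightarrow> real) \<Rightarrow> (nat \<Rightarrow> nat \<times> bool) \<Rightarrow> real" where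
  "cond_exp_t n t h \<omega> = measure_pmf.expectation (step_pmf n) (\<lambda>c. h (fun_upd \<omega> t c))"

end

theory Submission
  imports Defs
begin

text \<open>Let h_j be the Bregman divergence of f_j at the minimiser x*. Co-coercivity of the
  gradients gives |grad f_j y - grad f_j x*|^2 <= 2 L h_j y, and since the gradients at x* sum
  to 0, the variance-reduced estimator satisfies
  E_t |g_t|^2 <= 4 L (f x_t - f x*) + 4 L D_(t-1), where D_t is the mean of the h_j over the
  snapshot points. Each snapshot is refreshed to the current iterate with probability 1/n, so
  E D_t = (1 - 1/n) E D_(t-1) + (1/n) E (f x_t - f x*); summing this recursion bounds the sum of
  the E D_(t-1) by the sum of the E (f x_t - f x*) plus n D_0 = n (f x_1 - f x*).\<close>

definition bregman_div :: "('a::real_inner \<Rightarrow> real) \<Rightarrow> ('a \<Rightarrow> 'a) \<Rightarrow> 'a \<Rightarrow> 'a \<Rightarrow> real" where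
  "bregman_div \<phi> g y z = \<phi> y - \<phi> z - g z \<bullet> (y - z)"

lemma has_real_derivative_along_line:
  fixes \<phi> :: "'a::real_inner \<Rightarrow> real"
  assumes "\<And>z. GDERIV \<phi> z :> g z"
  shows "((\<lambda>s. \<phi> (y + s *\<^sub>R v)) has_real_derivative (g (y + s *\<^sub>R v) \<bullet> v)) (at s)"
proof -
  have line: "((\<lambda>s. y + s *\<^sub>R v) has_derivative (\<lambda>h. h *\<^sub>R v)) (at s)"
    by (auto intro!: derivative_eq_intros)
  have "(\<phi> has_derivative (\<lambda>h. h \<bullet> g (y + s *\<^sub>R v))) (at (y + s *\<^sub>R v))"
    using assms unfolding gderiv_def by blast
  from has_derivative_compose[OF line this]
  have "((\<lambda>s. \<phi> (y + s *\<^sub>R v)) has_derivative (\<lambda>h. (h *\<^sub>R v) \<bullet> g (y + s *\<^sub>R v))) (at s)" .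
  moreover have "(\<lambda>h. (h *\<^sub>R v) \<bullet> g (y + s *\<^sub>R v)) = (*) (g (y + s *\<^sub>R v) \<bullet> v)"
    by (auto simp: inner_commute)
  ultimately show ?thesis by (simp add: has_field_derivative_def)
qed

lemma bregman_div_nonneg:
  fixes \<phi> :: "'a::real_inner \<Rightarrow> real"
  assumes cv: "convex_on UNIV \<phi>" and d: "\<And>z. GDERIV \<phi> z :> g z"
  shows "0 \<le> bregman_div \<phi> g y x"
proof -
  define h where "h s = \<phi> (x + s *\<^sub>R (y - x))" for s
  have "convex_on UNIV h"
  proof (rule convex_onI)
    fix t a b :: real assume "0 < t" "t < 1"
    then show "h ((1 - t) *\<^sub>R a + t *\<^sub>R b) \<le> (1 - t) * h a + t * h b"
      using convex_onD[OF cv, of t "x + a *\<^sub>R (y - x)" "x + b *\<^sub>R (y - x)"]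
      by (simp add: h_def algebra_simps)
  qed simp
  moreover have "(h has_real_derivative (g (x + 0 *\<^sub>R (y - x)) \<bullet> (y - x))) (at 0)"
    unfolding h_def by (rule has_real_derivative_along_line[OF d])
  ultimately have "h 1 - h 0 \<ge> (g x \<bullet> (y - x)) * (1 - 0)"
    by (intro convex_on_imp_above_tangent[where A=UNIV]) auto
  then show ?thesis by (simp add: h_def bregman_div_def)
qed

lemma lipschitz_gderiv_quadratic_upper_bound:
  fixes \<phi> :: "'a::real_inner \<Rightarrow> real"
  assumes d: "\<And>z. GDERIV \<phi> z :> g z"
    and sm: "\<And>y z. norm (g y - g z) \<le> L * norm (y - z)"
  shows "\<phi> (y + v) \<le> \<phi> y + g y \<bullet> v + L / 2 * (norm v)\<^sup>2"
proof -
  define h where "h s = \<phi> (y + s *\<^sub>R v) - s * (g y \<bullet> v) - L / 2 * s\<^sup>2 * (norm v)\<^sup>2" for s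
  have "h 1 \<le> h 0"
  proof (rule DERIV_nonpos_imp_nonincreasing[of 0 1 h])
    fix s :: real assume s: "0 \<le> s" "s \<le> 1"
    have "(h has_real_derivative (g (y + s *\<^sub>R v) \<bullet> v - g y \<bullet> v - L * s * (norm v)\<^sup>2)) (at s)"
      unfolding h_def
      by (rule derivative_eq_intros has_real_derivative_along_line[OF d] | simp)+
    moreover have "g (y + s *\<^sub>R v) \<bullet> v - g y \<bullet> v \<le> L * s * (norm v)\<^sup>2"
    proof -
      have "g (y + s *\<^sub>R v) \<bullet> v - g y \<bullet> v \<le> norm (g (y + s *\<^sub>R v) - g y) * norm v"
        using norm_cauchy_schwarz by (metis inner_diff_left)
      also have "\<dots> \<le> (L * norm (s *\<^sub>R v)) * norm v"
        using sm[of "y + s *\<^sub>R v" y] by (intro mult_right_mono) auto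
      also have "\<dots> = L * s * (norm v)\<^sup>2"
        using s by (simp add: power2_eq_square)
      finally show ?thesis .
    qed
    ultimately show "\<exists>D. (h has_real_derivative D) (at s) \<and> D \<le> 0"
      by (intro exI[of _ "g (y + s *\<^sub>R v) \<bullet> v - g y \<bullet> v - L * s * (norm v)\<^sup>2"]) simp
  qed simp
  then show ?thesis by (simp add: h_def)
qed

text \<open>Compare the tangent inequality at x with the quadratic upper bound at y along the step
  -(1/L) (g y - g x).\<close>
lemma sq_norm_gderiv_diff_le_bregman_div:
  fixes \<phi> :: "'a::real_inner \<Rightarrow> real"
  assumes cv: "convex_on UNIV \<phi>" and d: "\<And>z. GDERIV \<phi> z :> g z"
    and sm: "\<And>y z. norm (g y - g z) \<le> L * norm (y - z)" and L: "0 \<le> L"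
  shows "(norm (g y - g x))\<^sup>2 \<le> 2 * L * bregman_div \<phi> g y x"
proof (cases "L = 0")
  case True
  then show ?thesis using sm[of y x] by simp
next
  case False
  with L have Lp: "0 < L" by simp
  define w where "w = g y - g x"
  define z where "z = y + (- (1 / L)) *\<^sub>R w"
  have tangent: "\<phi> x + g x \<bullet> (z - x) \<le> \<phi> z"
    using bregman_div_nonneg[OF cv d, of z x] by (simp add: bregman_div_def)
  have upper: "\<phi> z \<le> \<phi> y + g y \<bullet> (- (1 / L) *\<^sub>R w) + L / 2 * (norm (- (1 / L) *\<^sub>R w))\<^sup>2"
    unfolding z_def by (rule lipschitz_gderiv_quadratic_upper_bound[OF d sm])
  have "L / 2 * (norm (- (1 / L) *\<^sub>R w))\<^sup>2 = (norm w)\<^sup>2 / (2 * L)"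
    using Lp by (simp add: power2_eq_square field_simps)
  moreover have "g y \<bullet> w - g x \<bullet> w = (norm w)\<^sup>2"
    by (simp add: w_def inner_diff_left power2_norm_eq_inner)
  ultimately have "(norm w)\<^sup>2 / (2 * L) \<le> bregman_div \<phi> g y x"
    using tangent upper
    by (simp add: z_def bregman_div_def inner_diff_right inner_add_right algebra_simps)
  then show ?thesis using Lp by (simp add: w_def field_simps)
qed

lemma lipschitz_const_nonneg:
  fixes g :: "'a::euclidean_space \<Rightarrow> 'b::real_normed_vector"
  assumes "\<And>y z. norm (g y - g z) \<le> L * norm (y - z)"
  shows "0 \<le> L"
proof -
  obtain b :: 'a where "b \<in> Basis" using nonempty_Basis by blast
  then have "norm (g 0 - g b) \<le> L" using assms[of 0 b] by simp
  then show ?thesis using norm_ge_zero order_trans by blast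
qed

lemma gderiv_sum:
  assumes "\<And>i. i \<in> I \<Longrightarrow> GDERIV (\<phi> i) x :> g i"
  shows "GDERIV (\<lambda>y. \<Sum>i\<in>I. \<phi> i y) x :> (\<Sum>i\<in>I. g i)"
  using has_derivative_sum[of I "\<lambda>i. \<phi> i" "\<lambda>i h. h \<bullet> g i"] assms
  by (simp add: gderiv_def inner_sum_right)

lemma gderiv_eq_0_at_minimum:
  assumes "GDERIV \<phi> x :> g" and "\<And>y. \<phi> x \<le> \<phi> y"
  shows "g = 0"
proof -
  have "(\<lambda>h. h \<bullet> g) = (\<lambda>h. 0)"
    using assms(1) unfolding gderiv_def
    by (rule has_derivative_local_min) (auto intro: always_eventually assms(2))
  then have "g \<bullet> g = 0" by meson
  then show ?thesis by simp
qed

lemma sum_bregman_div_at_stationary: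
  assumes "(\<Sum>i\<in>I. g i z) = 0"
  shows "(\<Sum>i\<in>I. bregman_div (\<phi> i) (g i) y z) = (\<Sum>i\<in>I. \<phi> i y) - (\<Sum>i\<in>I. \<phi> i z)"
  using assms by (simp add: bregman_div_def sum_subtractf flip: inner_sum_left)

lemma sq_norm_diff_le:
  fixes a b :: "'a::real_inner"
  shows "(norm (a - b))\<^sup>2 \<le> 2 * (norm a)\<^sup>2 + 2 * (norm b)\<^sup>2"
proof -
  have "0 \<le> (norm (a + b))\<^sup>2" by simp
  then show ?thesis
    by (simp add: power2_norm_eq_inner inner_diff_left inner_diff_right inner_add_left
        inner_add_right inner_commute)
qed

text \<open>The control variate v j - mean v is centred, so its second moment is at most that of v.\<close>
lemma mean_sq_norm_control_variate_le:
  fixes u v :: "nat \<Rightarrow> 'a::real_inner"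
  assumes n: "n \<ge> 1"
  shows "(1 / real n) * (\<Sum>j<n. (norm (u j - v j + (1 / real n) *\<^sub>R (\<Sum>k<n. v k)))\<^sup>2)
     \<le> 2 * ((1 / real n) * (\<Sum>j<n. (norm (u j))\<^sup>2)) + 2 * ((1 / real n) * (\<Sum>j<n. (norm (v j))\<^sup>2))"
proof -
  define m where "m = (1 / real n) *\<^sub>R (\<Sum>k<n. v k)"
  have sum_v: "(\<Sum>k<n. v k) = real n *\<^sub>R m" using n by (simp add: m_def)
  have "(\<Sum>j<n. (norm (v j - m))\<^sup>2)
      = (\<Sum>j<n. (norm (v j))\<^sup>2) - 2 * ((\<Sum>j<n. v j) \<bullet> m) + real n * (norm m)\<^sup>2"
    by (simp add: power2_norm_eq_inner inner_diff_left inner_diff_right inner_commute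
        sum.distrib sum_subtractf inner_sum_left inner_sum_right sum_distrib_left)
  also have "\<dots> = (\<Sum>j<n. (norm (v j))\<^sup>2) - real n * (norm m)\<^sup>2"
    by (simp add: sum_v power2_norm_eq_inner)
  finally have centred: "(\<Sum>j<n. (norm (v j - m))\<^sup>2) \<le> (\<Sum>j<n. (norm (v j))\<^sup>2)" by simp
  have "(\<Sum>j<n. (norm (u j - v j + m))\<^sup>2) \<le> (\<Sum>j<n. 2 * (norm (u j))\<^sup>2 + 2 * (norm (v j - m))\<^sup>2)"
    by (intro sum_mono) (use sq_norm_diff_le[of "u j" "v j - m" for j] in \<open>simp add: algebra_simps\<close>)
  also have "\<dots> = 2 * (\<Sum>j<n. (norm (u j))\<^sup>2) + 2 * (\<Sum>j<n. (norm (v j - m))\<^sup>2)"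
    by (simp add: sum.distrib sum_distrib_left)
  also have "\<dots> \<le> 2 * (\<Sum>j<n. (norm (u j))\<^sup>2) + 2 * (\<Sum>j<n. (norm (v j))\<^sup>2)"
    using centred by simp
  finally have "(1 / real n) * (\<Sum>j<n. (norm (u j - v j + m))\<^sup>2)
      \<le> (1 / real n) * (2 * (\<Sum>j<n. (norm (u j))\<^sup>2) + 2 * (\<Sum>j<n. (norm (v j))\<^sup>2))"
    by (intro mult_left_mono) auto
  then show ?thesis by (simp add: m_def algebra_simps)
qed

lemma mean_sq_norm_lvr_estimator_le:
  fixes fi :: "nat \<Rightarrow> 'a::real_inner \<Rightarrow> real"
  assumes n: "n \<ge> 1"
    and cv: "\<And>i. i < n \<Longrightarrow> convex_on UNIV (fi i)"
    and d: "\<And>i y. i < n \<Longrightarrow> GDERIV (fi i) y :> grad i y"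
    and sm: "\<And>i y z. i < n \<Longrightarrow> norm (grad i y - grad i z) \<le> L * norm (y - z)"
    and L: "0 \<le> L"
    and stationary: "(\<Sum>i<n. grad i z) = 0"
  shows "(1 / real n) * (\<Sum>i<n. (norm (grad i y - grad i (s i) + (1 / real n) *\<^sub>R (\<Sum>j<n. grad j (s j))))\<^sup>2)
     \<le> 4 * L * ((1 / real n) * (\<Sum>i<n. bregman_div (fi i) (grad i) y z))
       + 4 * L * ((1 / real n) * (\<Sum>i<n. bregman_div (fi i) (grad i) (s i) z))"
proof -
  define u where "u i = grad i y - grad i z" for i
  define v where "v i = grad i (s i) - grad i z" for i
  have "(\<Sum>j<n. grad j (s j)) = (\<Sum>j<n. v j)"
    by (simp add: v_def sum_subtractf stationary)
  then have "(1 / real n) * (\<Sum>i<n. (norm (grad i y - grad i (s i) + (1 / real n) *\<^sub>R (\<Sum>j<n. grad j (s j))))\<^sup>2)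
      = (1 / real n) * (\<Sum>i<n. (norm (u i - v i + (1 / real n) *\<^sub>R (\<Sum>j<n. v j)))\<^sup>2)"
    by (simp add: u_def v_def)
  also have "\<dots> \<le> 2 * ((1 / real n) * (\<Sum>i<n. (norm (u i))\<^sup>2)) + 2 * ((1 / real n) * (\<Sum>i<n. (norm (v i))\<^sup>2))"
    by (rule mean_sq_norm_control_variate_le[OF n])
  also have "\<dots> \<le> 2 * ((1 / real n) * (\<Sum>i<n. 2 * L * bregman_div (fi i) (grad i) y z))
      + 2 * ((1 / real n) * (\<Sum>i<n. 2 * L * bregman_div (fi i) (grad i) (s i) z))"
    unfolding u_def v_def
    by (intro add_mono mult_left_mono sum_mono sq_norm_gderiv_diff_le_bregman_div cv d sm L) auto
  finally show ?thesis by (simp add: sum_distrib_left mult_ac)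
qed

lemma finite_set_step_pmf: "n \<ge> 1 \<Longrightarrow> finite (set_pmf (step_pmf n))"
  by (simp add: step_pmf_def set_pmf_of_set lessThan_empty_iff)

lemma finite_set_Pi_step_pmf: "n \<ge> 1 \<Longrightarrow> finite A \<Longrightarrow> finite (set_pmf (Pi_pmf A d (\<lambda>_. step_pmf n)))"
  by (subst set_Pi_pmf) (auto intro!: finite_set_step_pmf)

lemma expectation_step_pmf_index:
  "n \<ge> 1 \<Longrightarrow> measure_pmf.expectation (step_pmf n) (\<lambda>c. \<phi> (fst c)) = (\<Sum>i<n. \<phi> i) / real n"
  by (simp add: step_pmf_def integral_pmf_of_set lessThan_empty_iff)

lemma expectation_step_pmf_coin:
  "n \<ge> 1 \<Longrightarrow> measure_pmf.expectation (step_pmf n) (\<lambda>c. \<psi> (snd c))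
     = (1 / real n) * \<psi> True + (1 - 1 / real n) * \<psi> False"
  by (simp add: step_pmf_def)

lemma expectation_finite_pmf:
  fixes h :: "'a \<Rightarrow> real"
  assumes "finite (set_pmf M)"
  shows "measure_pmf.expectation M h = (\<Sum>a\<in>set_pmf M. h a * pmf M a)"
  by (rule integral_measure_pmf_real) (use assms in auto)

lemma expectation_finite_pmf_swap:
  fixes F :: "'a \<Rightarrow> 'b \<Rightarrow> real"
  assumes A: "finite (set_pmf A)" and B: "finite (set_pmf B)"
  shows "measure_pmf.expectation A (\<lambda>a. measure_pmf.expectation B (\<lambda>b. F a b))
       = measure_pmf.expectation B (\<lambda>b. measure_pmf.expectation A (\<lambda>a. F a b))"
proof -
  have "measure_pmf.expectation A (\<lambda>a. measure_pmf.expectation B (\<lambda>b. F a b))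
      = (\<Sum>a\<in>set_pmf A. \<Sum>b\<in>set_pmf B. F a b * pmf B b * pmf A a)"
    by (simp add: expectation_finite_pmf[OF A] expectation_finite_pmf[OF B] sum_distrib_right)
  also have "\<dots> = (\<Sum>b\<in>set_pmf B. \<Sum>a\<in>set_pmf A. F a b * pmf B b * pmf A a)"
    by (rule sum.swap)
  also have "\<dots> = measure_pmf.expectation B (\<lambda>b. measure_pmf.expectation A (\<lambda>a. F a b))"
    by (simp add: expectation_finite_pmf[OF A] expectation_finite_pmf[OF B]
        sum_distrib_left mult_ac)
  finally show ?thesis .
qed

lemma expectation_finite_pair_pmf:
  fixes F :: "'a \<times> 'b \<Rightarrow> real"
  assumes A: "finite (set_pmf A)" and B: "finite (set_pmf B)"
  shows "measure_pmf.expectation (pair_pmf A B) F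
       = measure_pmf.expectation A (\<lambda>a. measure_pmf.expectation B (\<lambda>b. F (a, b)))"
proof -
  have AB: "finite (set_pmf (pair_pmf A B))" using A B by simp
  have "measure_pmf.expectation (pair_pmf A B) F
      = (\<Sum>a\<in>set_pmf A. \<Sum>b\<in>set_pmf B. F (a, b) * pmf (pair_pmf A B) (a, b))"
    by (simp add: expectation_finite_pmf[OF AB] sum.cartesian_product case_prod_beta')
  also have "\<dots> = measure_pmf.expectation A (\<lambda>a. measure_pmf.expectation B (\<lambda>b. F (a, b)))"
    by (simp add: expectation_finite_pmf[OF A] expectation_finite_pmf[OF B]
        sum_distrib_left pmf_pair ac_simps)
  finally show ?thesis .
qed

text \<open>omega_pmf is the product of the t-th step and the independent remaining steps.\<close>
lemma expectation_cond_exp_t: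
  assumes n: "n \<ge> 1" and t: "t \<in> {1..T}"
  shows "measure_pmf.expectation (omega_pmf n T) (cond_exp_t n t h) = measure_pmf.expectation (omega_pmf n T) h"
proof -
  define A where "A = {1..T} - {t}"
  define P where "P = Pi_pmf A (0, False) (\<lambda>_. step_pmf n)"
  have "{1..T} = insert t A" using t by (auto simp: A_def)
  then have "omega_pmf n T = Pi_pmf (insert t A) (0, False) (\<lambda>_. step_pmf n)"
    by (simp add: omega_pmf_def)
  also have "\<dots> = map_pmf (\<lambda>(c, \<omega>'). \<omega>' (t := c)) (pair_pmf (step_pmf n) P)"
    unfolding P_def by (rule Pi_pmf_insert) (simp_all add: A_def)
  finally have resample: "omega_pmf n T = map_pmf (\<lambda>(c, \<omega>'). \<omega>' (t := c)) (pair_pmf (step_pmf n) P)" .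
  have S: "finite (set_pmf (step_pmf n))" by (rule finite_set_step_pmf[OF n])
  have P: "finite (set_pmf P)" unfolding P_def by (rule finite_set_Pi_step_pmf[OF n]) (simp add: A_def)
  have "measure_pmf.expectation (omega_pmf n T) (cond_exp_t n t h)
      = measure_pmf.expectation P (\<lambda>\<omega>. measure_pmf.expectation (step_pmf n) (\<lambda>c. h (\<omega> (t := c))))"
    unfolding resample by (simp add: expectation_finite_pair_pmf[OF S P] cond_exp_t_def case_prod_unfold)
  also have "\<dots> = measure_pmf.expectation (step_pmf n) (\<lambda>c. measure_pmf.expectation P (\<lambda>\<omega>. h (\<omega> (t := c))))"
    by (rule expectation_finite_pmf_swap[OF P S])
  also have "\<dots> = measure_pmf.expectation (omega_pmf n T) h"
    unfolding resample by (simp add: expectation_finite_pair_pmf[OF S P] case_prod_unfold)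
  finally show ?thesis .
qed

lemma sum_lessThan_if_eq:
  fixes a b :: real
  assumes "j < n"
  shows "(\<Sum>i<n. if i = j then a else b) = a + (real n - 1) * b"
proof -
  have "(\<Sum>i<n. if i = j then a else b) = (\<Sum>i<n. b + (if i = j then a - b else 0))"
    by (intro sum.cong) auto
  then show ?thesis using assms by (simp add: sum.distrib algebra_simps)
qed

definition snapshot :: "estimator_type \<Rightarrow> (nat \<Rightarrow> nat \<times> bool) \<Rightarrow> (nat \<Rightarrow> 'v) \<Rightarrow> nat \<Rightarrow> nat \<Rightarrow> 'v" where
  "snapshot est \<omega> x k j = (case est of SAGA \<Rightarrow> saga_snap \<omega> x j k | LSVRG \<Rightarrow> svrg_snap \<omega> x k)"

lemma lvr_grad_snapshot:
  "lvr_grad est n grad \<omega> x t =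
     grad (fst (\<omega> t)) (x t) - grad (fst (\<omega> t)) (snapshot est \<omega> x (t - 1) (fst (\<omega> t)))
     + (1 / real n) *\<^sub>R (\<Sum>j<n. grad j (snapshot est \<omega> x (t - 1) j))"
  by (cases est) (simp_all add: lvr_grad_def snapshot_def Let_def)

lemma snapshot_0 [simp]: "snapshot est \<omega> x 0 j = x 1"
  by (cases est) (simp_all add: snapshot_def)

lemma snapshot_Suc:
  "snapshot est \<omega> x (Suc k) j =
     (case est of
        SAGA \<Rightarrow> (if fst (\<omega> (Suc k)) = j then x (Suc k) else snapshot est \<omega> x k j)
      | LSVRG \<Rightarrow> (if snd (\<omega> (Suc k)) then x (Suc k) else snapshot est \<omega> x k j))"
  by (cases est) (simp_all add: snapshot_def)

lemma snapshot_cong: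
  assumes "\<And>s. 1 \<le> s \<Longrightarrow> s \<le> k \<Longrightarrow> \<omega> s = \<omega>' s \<and> x s = x' s" and "x 1 = x' 1"
  shows "snapshot est \<omega> x k j = snapshot est \<omega>' x' k j"
  using assms by (induction k) (auto simp: snapshot_Suc split: estimator_type.split)

locale adalvr_process =
  fixes n T :: nat and est :: estimator_type
    and x :: "(nat \<Rightarrow> nat \<times> bool) \<Rightarrow> nat \<Rightarrow> real^'d" and x1 :: "real^'d"
  assumes n_pos: "n \<ge> 1"
    and init: "\<And>\<omega>. x \<omega> 1 = x1"
    and adapted: "\<And>\<omega> \<omega>' t. 1 \<le> t \<Longrightarrow> t \<le> T \<Longrightarrow> (\<And>s. 1 \<le> s \<Longrightarrow> s < t \<Longrightarrow> \<omega> s = \<omega>' s)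
                    \<Longrightarrow> x \<omega> t = x \<omega>' t"
begin

definition snapshot_mean :: "(nat \<Rightarrow> real^'d \<Rightarrow> real) \<Rightarrow> (nat \<Rightarrow> nat \<times> bool) \<Rightarrow> nat \<Rightarrow> real" where
  "snapshot_mean h \<omega> k = (1 / real n) * (\<Sum>j<n. h j (snapshot est \<omega> (x \<omega>) k j))"

lemma x_fun_upd:
  assumes "t \<le> T" "1 \<le> s" "s \<le> t"
  shows "x (\<omega> (t := c)) s = x \<omega> s"
  using assms by (intro adapted) auto

lemma snapshot_fun_upd_prev:
  assumes "t \<le> T"
  shows "snapshot est (\<omega> (t := c)) (x (\<omega> (t := c))) (t - 1) j = snapshot est \<omega> (x \<omega>) (t - 1) j"
proof (rule snapshot_cong)
  show "x (\<omega> (t := c)) 1 = x \<omega> 1" using init[of "\<omega> (t := c)"] init[of \<omega>] by simp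
qed (use assms x_fun_upd in auto)

lemma snapshot_fun_upd:
  assumes "1 \<le> t" "t \<le> T"
  shows "snapshot est (\<omega> (t := c)) (x (\<omega> (t := c))) t j =
     (case est of
        SAGA \<Rightarrow> (if fst c = j then x \<omega> t else snapshot est \<omega> (x \<omega>) (t - 1) j)
      | LSVRG \<Rightarrow> (if snd c then x \<omega> t else snapshot est \<omega> (x \<omega>) (t - 1) j))"
proof -
  obtain k where t: "t = Suc k" using assms by (cases t) auto
  show ?thesis
    using snapshot_fun_upd_prev[of t \<omega> c j] x_fun_upd[of t t \<omega> c] assms
    unfolding t by (cases est) (simp_all add: snapshot_Suc)
qed

lemma lvr_grad_fun_upd:
  assumes "1 \<le> t" "t \<le> T"
  shows "lvr_grad est n grad (\<omega> (t := c)) (x (\<omega> (t := c))) t =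
     grad (fst c) (x \<omega> t) - grad (fst c) (snapshot est \<omega> (x \<omega>) (t - 1) (fst c))
     + (1 / real n) *\<^sub>R (\<Sum>j<n. grad j (snapshot est \<omega> (x \<omega>) (t - 1) j))"
  using snapshot_fun_upd_prev[of t \<omega> c] x_fun_upd[of t t \<omega> c] assms
  by (simp add: lvr_grad_snapshot)

lemma cond_exp_t_sq_norm_lvr_grad:
  assumes "1 \<le> t" "t \<le> T"
  shows "cond_exp_t n t (\<lambda>\<omega>'. (norm (lvr_grad est n grad \<omega>' (x \<omega>') t))\<^sup>2) \<omega> =
     (1 / real n) * (\<Sum>i<n. (norm (grad i (x \<omega> t) - grad i (snapshot est \<omega> (x \<omega>) (t - 1) i)
       + (1 / real n) *\<^sub>R (\<Sum>j<n. grad j (snapshot est \<omega> (x \<omega>) (t - 1) j))))\<^sup>2)"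
proof -
  define \<Phi> where "\<Phi> i = (norm (grad i (x \<omega> t) - grad i (snapshot est \<omega> (x \<omega>) (t - 1) i)
       + (1 / real n) *\<^sub>R (\<Sum>j<n. grad j (snapshot est \<omega> (x \<omega>) (t - 1) j))))\<^sup>2" for i
  have "cond_exp_t n t (\<lambda>\<omega>'. (norm (lvr_grad est n grad \<omega>' (x \<omega>') t))\<^sup>2) \<omega>
      = measure_pmf.expectation (step_pmf n) (\<lambda>c. \<Phi> (fst c))"
    using assms by (simp add: cond_exp_t_def lvr_grad_fun_upd \<Phi>_def)
  also have "\<dots> = (\<Sum>i<n. \<Phi> i) / real n"
    by (rule expectation_step_pmf_index[OF n_pos])
  finally show ?thesis by (simp add: \<Phi>_def)
qed

lemma cond_exp_t_snapshot_mean: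
  assumes t: "1 \<le> t" "t \<le> T"
  shows "cond_exp_t n t (\<lambda>\<omega>'. snapshot_mean h \<omega>' t) \<omega> =
     (1 - 1 / real n) * snapshot_mean h \<omega> (t - 1) + (1 / real n) * ((1 / real n) * (\<Sum>j<n. h j (x \<omega> t)))"
proof -
  define s where "s j = snapshot est \<omega> (x \<omega>) (t - 1) j" for j
  have np: "0 < real n" using n_pos by simp
  show ?thesis
  proof (cases est)
    case SAGA
    define \<Psi> where "\<Psi> i = (1 / real n) * (\<Sum>j<n. h j (if i = j then x \<omega> t else s j))" for i
    have "cond_exp_t n t (\<lambda>\<omega>'. snapshot_mean h \<omega>' t) \<omega> = measure_pmf.expectation (step_pmf n) (\<lambda>c. \<Psi> (fst c))"
      unfolding cond_exp_t_def snapshot_mean_def snapshot_fun_upd[OF t] \<Psi>_def s_def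
      by (rule Bochner_Integration.integral_cong) (simp_all add: SAGA)
    also have "\<dots> = (\<Sum>i<n. \<Psi> i) / real n"
      by (rule expectation_step_pmf_index[OF n_pos])
    also have "(\<Sum>i<n. \<Psi> i) = (1 / real n) * (\<Sum>j<n. \<Sum>i<n. h j (if i = j then x \<omega> t else s j))"
      unfolding \<Psi>_def sum_distrib_left[symmetric] by (rule arg_cong[OF sum.swap])
    also have "\<dots> = (1 / real n) * (\<Sum>j<n. h j (x \<omega> t) + (real n - 1) * h j (s j))"
      by (intro arg_cong[where f="\<lambda>z. (1 / real n) * z"] sum.cong) (simp_all add: if_distrib sum_lessThan_if_eq)
    also have "\<dots> = (1 / real n) * ((\<Sum>j<n. h j (x \<omega> t)) + (real n - 1) * (\<Sum>j<n. h j (s j)))"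
      by (simp add: sum.distrib sum_distrib_left)
    finally show ?thesis
      using np by (simp add: snapshot_mean_def s_def field_simps)
  next
    case LSVRG
    define \<psi> where "\<psi> b = (if b then (1 / real n) * (\<Sum>j<n. h j (x \<omega> t)) else snapshot_mean h \<omega> (t - 1))" for b
    have "cond_exp_t n t (\<lambda>\<omega>'. snapshot_mean h \<omega>' t) \<omega> = measure_pmf.expectation (step_pmf n) (\<lambda>c. \<psi> (snd c))"
      unfolding cond_exp_t_def snapshot_mean_def snapshot_fun_upd[OF t] \<psi>_def
      by (rule Bochner_Integration.integral_cong) (simp_all add: LSVRG)
    also have "\<dots> = (1 / real n) * \<psi> True + (1 - 1 / real n) * \<psi> False"
      by (rule expectation_step_pmf_coin[OF n_pos])
    finally show ?thesis by (simp add: \<psi>_def algebra_simps)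
  qed
qed

lemma finite_set_omega_pmf: "finite (set_pmf (omega_pmf n T))"
  unfolding omega_pmf_def by (rule finite_set_Pi_step_pmf[OF n_pos]) simp

lemma expectation_snapshot_mean_telescope:
  "(\<Sum>t\<in>{1..T}. measure_pmf.expectation (omega_pmf n T) (\<lambda>\<omega>. snapshot_mean h \<omega> (t - 1)))
     = (\<Sum>t\<in>{1..T}. measure_pmf.expectation (omega_pmf n T) (\<lambda>\<omega>. (1 / real n) * (\<Sum>j<n. h j (x \<omega> t))))
       + real n * (measure_pmf.expectation (omega_pmf n T) (\<lambda>\<omega>. snapshot_mean h \<omega> 0)
                   - measure_pmf.expectation (omega_pmf n T) (\<lambda>\<omega>. snapshot_mean h \<omega> T))"
proof -
  let ?E = "measure_pmf.expectation (omega_pmf n T)"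
  define S where "S k = ?E (\<lambda>\<omega>. snapshot_mean h \<omega> k)" for k
  define M where "M t = ?E (\<lambda>\<omega>. (1 / real n) * (\<Sum>j<n. h j (x \<omega> t)))" for t
  have int: "integrable (measure_pmf (omega_pmf n T)) g" for g :: "(nat \<Rightarrow> nat \<times> bool) \<Rightarrow> real"
    by (rule integrable_measure_pmf_finite[OF finite_set_omega_pmf])
  have "S (t - 1) = M t + real n * (S (t - 1) - S t)" if t: "t \<in> {1..T}" for t
  proof -
    have "S t = ?E (cond_exp_t n t (\<lambda>\<omega>. snapshot_mean h \<omega> t))"
      unfolding S_def by (rule expectation_cond_exp_t[OF n_pos t, symmetric])
    also have "\<dots> = ?E (\<lambda>\<omega>. (1 - 1 / real n) * snapshot_mean h \<omega> (t - 1)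
                          + (1 / real n) * ((1 / real n) * (\<Sum>j<n. h j (x \<omega> t))))"
      using t by (intro Bochner_Integration.integral_cong) (simp_all add: cond_exp_t_snapshot_mean)
    also have "\<dots> = (1 - 1 / real n) * S (t - 1) + (1 / real n) * M t"
      by (simp add: S_def M_def int)
    finally show ?thesis using n_pos by (simp add: field_simps)
  qed
  then have "(\<Sum>t\<in>{1..T}. S (t - 1)) = (\<Sum>t\<in>{1..T}. M t + real n * (S (t - 1) - S t))"
    by (rule sum.cong[OF refl])
  also have "\<dots> = (\<Sum>t\<in>{1..T}. M t) + real n * (\<Sum>t\<in>{1..T}. S (t - 1) - S t)"
    by (simp add: sum.distrib sum_distrib_left)
  also have "(\<Sum>t\<in>{1..T}. S (t - 1) - S t) = S 0 - S T"
    by (induction T) auto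
  finally show ?thesis by (simp add: S_def M_def)
qed

lemma expectation_sum_le_snapshot_potential:
  assumes h_nonneg: "\<And>j y. j < n \<Longrightarrow> 0 \<le> h j y" and c: "0 \<le> c"
    and Q: "\<And>\<omega> t. 1 \<le> t \<Longrightarrow> t \<le> T \<Longrightarrow>
              Q t \<omega> \<le> c * ((1 / real n) * (\<Sum>j<n. h j (x \<omega> t))) + c * snapshot_mean h \<omega> (t - 1)"
  shows "measure_pmf.expectation (omega_pmf n T) (\<lambda>\<omega>. \<Sum>t\<in>{1..T}. Q t \<omega>)
     \<le> 2 * c * measure_pmf.expectation (omega_pmf n T) (\<lambda>\<omega>. \<Sum>t\<in>{1..T}. (1 / real n) * (\<Sum>j<n. h j (x \<omega> t)))
       + c * real n * ((1 / real n) * (\<Sum>j<n. h j x1))"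
proof -
  let ?E = "measure_pmf.expectation (omega_pmf n T)"
  define S where "S k = ?E (\<lambda>\<omega>. snapshot_mean h \<omega> k)" for k
  define M where "M t = ?E (\<lambda>\<omega>. (1 / real n) * (\<Sum>j<n. h j (x \<omega> t)))" for t
  have int: "integrable (measure_pmf (omega_pmf n T)) g" for g :: "(nat \<Rightarrow> nat \<times> bool) \<Rightarrow> real"
    by (rule integrable_measure_pmf_finite[OF finite_set_omega_pmf])
  have S0: "S 0 = (1 / real n) * (\<Sum>j<n. h j x1)"
    using init by (simp add: S_def snapshot_mean_def)
  have ST: "0 \<le> S T"
    unfolding S_def snapshot_mean_def
    by (intro Bochner_Integration.integral_nonneg mult_nonneg_nonneg sum_nonneg h_nonneg) auto
  have "?E (\<lambda>\<omega>. \<Sum>t\<in>{1..T}. Q t \<omega>)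
      \<le> ?E (\<lambda>\<omega>. \<Sum>t\<in>{1..T}. c * ((1 / real n) * (\<Sum>j<n. h j (x \<omega> t))) + c * snapshot_mean h \<omega> (t - 1))"
    by (intro integral_mono int sum_mono Q) auto
  also have "\<dots> = c * (\<Sum>t\<in>{1..T}. M t) + c * (\<Sum>t\<in>{1..T}. S (t - 1))"
    by (simp add: int Bochner_Integration.integral_sum sum.distrib sum_distrib_left M_def S_def)
  also have "\<dots> = 2 * c * (\<Sum>t\<in>{1..T}. M t) + c * real n * (S 0 - S T)"
  proof -
    have telescope: "(\<Sum>t\<in>{1..T}. S (t - 1)) = (\<Sum>t\<in>{1..T}. M t) + real n * (S 0 - S T)"
      unfolding S_def M_def by (rule expectation_snapshot_mean_telescope)
    show ?thesis unfolding telescope by (simp add: algebra_simps)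
  qed
  also have "\<dots> \<le> 2 * c * (\<Sum>t\<in>{1..T}. M t) + c * real n * S 0"
    using ST c by (simp add: mult_left_mono)
  finally show ?thesis
    by (simp add: S0 M_def int Bochner_Integration.integral_sum)
qed

end

theorem proposition1:
  fixes n T :: nat and L \<eta> :: real and ag :: adagrad_variant and est :: estimator_type
    and fi :: "nat \<Rightarrow> real^'d \<Rightarrow> real" and grad :: "nat \<Rightarrow> real^'d \<Rightarrow> real^'d"
    and f :: "real^'d \<Rightarrow> real" and X :: "(real^'d) set" and xstar x1 :: "real^'d"
    and x :: "(nat \<Rightarrow> nat \<times> bool) \<Rightarrow> nat \<Rightarrow> real^'d"
  assumes n: "n \<ge> 1"
    and f_def: "\<And>y. f y = (1 / real n) * (\<Sum>i<n. fi i y)"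
    and convex: "\<And>i. i < n \<Longrightarrow> convex_on UNIV (fi i)"
    and grad: "\<And>i y. i < n \<Longrightarrow> GDERIV (fi i) y :> grad i y"
    and smooth: "\<And>i y z. i < n \<Longrightarrow> norm (grad i y - grad i z) \<le> L * norm (y - z)"
    and X: "compact X" "convex X"
    and xstar: "xstar \<in> X" "\<And>y. f xstar \<le> f y"
    and T: "T \<ge> 1"
    and eta: "\<eta> > 0"
    and init: "\<And>\<omega>. x \<omega> 1 = x1"
    and adapted: "\<And>\<omega> \<omega>' t. 1 \<le> t \<Longrightarrow> t \<le> T \<Longrightarrow> (\<And>s. 1 \<le> s \<Longrightarrow> s < t \<Longrightarrow> \<omega> s = \<omega>' s)
                    \<Longrightarrow> x \<omega> t = x \<omega>' t"
    and steps: "\<And>\<omega> t. 1 \<le> t \<Longrightarrow> t < T \<Longrightarrow> adalvr_step_ok ag est n grad \<eta> X \<omega> (x \<omega>) t"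
  shows "measure_pmf.expectation (omega_pmf n T)
           (\<lambda>\<omega>. \<Sum>t\<in>{1..T}. cond_exp_t n t (\<lambda>\<omega>'. (norm (lvr_grad est n grad \<omega>' (x \<omega>') t))\<^sup>2) \<omega>)
         \<le> measure_pmf.expectation (omega_pmf n T)
              (\<lambda>\<omega>. 8 * L * (\<Sum>t\<in>{1..T}. f (x \<omega> t) - f xstar))
           + 4 * L * real n * (f x1 - f xstar)"
proof -
  interpret adalvr_process n T est x x1
    by unfold_locales (fact n, fact init, rule adapted)
  have L: "0 \<le> L"
    using smooth[of 0] n by (intro lipschitz_const_nonneg[of "grad 0"]) auto
  have "GDERIV (\<lambda>y. \<Sum>i<n. fi i y) xstar :> (\<Sum>i<n. grad i xstar)"
    using grad by (intro gderiv_sum) auto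
  moreover have "(\<Sum>i<n. fi i xstar) \<le> (\<Sum>i<n. fi i y)" for y
    using xstar(2)[of y] n by (simp add: f_def divide_le_cancel)
  ultimately have stationary: "(\<Sum>i<n. grad i xstar) = 0"
    by (rule gderiv_eq_0_at_minimum)
  define h where "h i y = bregman_div (fi i) (grad i) y xstar" for i y
  have mean_h: "(1 / real n) * (\<Sum>i<n. h i y) = f y - f xstar" for y
    using sum_bregman_div_at_stationary[of grad xstar "{..<n}" fi y] stationary
    by (simp add: h_def f_def right_diff_distrib)
  have "measure_pmf.expectation (omega_pmf n T)
           (\<lambda>\<omega>. \<Sum>t\<in>{1..T}. cond_exp_t n t (\<lambda>\<omega>'. (norm (lvr_grad est n grad \<omega>' (x \<omega>') t))\<^sup>2) \<omega>)
      \<le> 2 * (4 * L) * measure_pmf.expectation (omega_pmf n T)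
           (\<lambda>\<omega>. \<Sum>t\<in>{1..T}. (1 / real n) * (\<Sum>j<n. h j (x \<omega> t)))
        + 4 * L * real n * ((1 / real n) * (\<Sum>j<n. h j x1))"
  proof (rule expectation_sum_le_snapshot_potential)
    show "0 \<le> h j y" if "j < n" for j y
      unfolding h_def using bregman_div_nonneg convex grad that by blast
    fix \<omega> t assume t: "1 \<le> t" "t \<le> T"
    show "cond_exp_t n t (\<lambda>\<omega>'. (norm (lvr_grad est n grad \<omega>' (x \<omega>') t))\<^sup>2) \<omega>
        \<le> 4 * L * ((1 / real n) * (\<Sum>j<n. h j (x \<omega> t))) + 4 * L * snapshot_mean h \<omega> (t - 1)"
      unfolding cond_exp_t_sq_norm_lvr_grad[OF t] snapshot_mean_def h_def
      by (rule mean_sq_norm_lvr_estimator_le[OF n convex grad smooth L stationary])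
  qed (use L in simp)
  from this[unfolded mean_h] show ?thesis by simp
qed

end
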